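(* Let $u$ be a convex function on an open convex set $\Omega\subset\mathbb{R}^2$. Then for every $x\in\Omega$, \[ |\partial u(x)| = \int_0^{2\pi}\frac12\left(R_+(x,\theta)^2-R_-(x,\theta)^2\right)^+\,d\theta, \] where \[ R_+(x,\theta)=\inf_{\theta'\in(\theta-\frac\pi2,\theta+\frac\pi2)}\frac{(\partial_{\theta'}u(x))^+}{\cos(\theta-\theta')},\qquad R_-(x,\theta)=\sup_{\theta'\in(\theta-\frac\pi2,\theta+\frac\pi2)}\frac{(-\partial_{\theta'+\pi}u(x))^+}{\cos(\theta-\theta')}. \]
   Context: $|\cdot|$ denotes Lebesgue measure on $\mathbb{R}^2$; $\partial u(x)=\{p\in\mathbb{R}^2: u(z)\ge u(x)+p\cdot(z-x)\ \forall z\in\Omega\}$ is the subgradient. For $\theta\in\mathbb{R}$, $e_\theta=(\cos\theta,\sin\theta)$ and $\partial_\theta u(x)=\lim_{r\to0^+}\frac{u(x+re_\theta)-u(x)}{r}$ is the one-sided directional derivative. For real $a$, $a^+=\max\{a,0\}$. *)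

theory Defs
  imports "HOL-Analysis.Analysis"
begin

definition evec :: "real \<Rightarrow> real^2" where
  "evec \<theta> = vector [cos \<theta>, sin \<theta>]"

definition subgrad :: "(real^2 \<Rightarrow> real) \<Rightarrow> (real^2) set \<Rightarrow> real^2 \<Rightarrow> (real^2) set" where
  "subgrad u \<Omega> x = {p. \<forall>z\<in>\<Omega>. u z \<ge> u x + p \<bullet> (z - x)}"

definition dirderiv :: "(real^2 \<Rightarrow> real) \<Rightarrow> real^2 \<Rightarrow> real \<Rightarrow> real" where
  "dirderiv u x \<theta> = Lim (at_right 0) (\<lambda>r. (u (x + r *\<^sub>R evec \<theta>) - u x) / r)"

text \<open>R_+ (a finite nonnegative infimum) and R_- (supremum, possibly +infinity), in ereal.\<close>
definition Rplus :: "(real^2 \<Rightarrow> real) \<Rightarrow> real^2 \<Rightarrow> real \<Rightarrow> ereal" where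
  "Rplus u x \<theta> = (INF \<theta>'\<in>{\<theta> - pi/2 <..< \<theta> + pi/2}.
      ereal (max (dirderiv u x \<theta>') 0 / cos (\<theta> - \<theta>')))"

definition Rminus :: "(real^2 \<Rightarrow> real) \<Rightarrow> real^2 \<Rightarrow> real \<Rightarrow> ereal" where
  "Rminus u x \<theta> = (SUP \<theta>'\<in>{\<theta> - pi/2 <..< \<theta> + pi/2}.
      ereal (max (- dirderiv u x (\<theta>' + pi)) 0 / cos (\<theta> - \<theta>')))"

end

theory Submission
  imports Defs
begin

(* The subgradient \<partial>u(x) is the intersection of the half-planes {p. p \<bullet> e\<^sub>\<phi> \<le> \<partial>\<^sub>\<phi>u(x)}, hence
   compact, and in polar coordinates its area is the integral over \<theta> of \<integral> r dr along the ray
   {r > 0. r e\<^sub>\<theta> \<in> \<partial>u(x)}. For r > 0, the half-planes with \<phi> in the open half circle around \<theta>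
   contain r e\<^sub>\<theta> iff r \<le> R\<^sub>+(x,\<theta>), those with \<phi> in the opposite open half circle iff R\<^sub>-(x,\<theta>) \<le> r,
   and the two remaining directions \<theta> \<plusminus> \<pi>/2 add no constraint because \<phi> \<mapsto> \<partial>\<^sub>\<phi>u(x) is upper
   semicontinuous. So every ray is the interval [R\<^sub>-, R\<^sub>+], contributing (R\<^sub>+\<^sup>2 - R\<^sub>-\<^sup>2)\<^sup>+/2. *)

section \<open>Polar coordinates in the plane\<close>

lemma evec_nth [simp]: "evec t $ 1 = cos t" "evec t $ 2 = sin t"
  by (simp_all add: evec_def)

lemma evec_eq_axis: "evec t = cos t *\<^sub>R axis 1 1 + sin t *\<^sub>R axis 2 1"
  by (simp add: vec_eq_iff forall_2 axis_def)

lemma continuous_on_evec [continuous_intros]: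
  fixes f :: "'a::t2_space \<Rightarrow> real"
  shows "continuous_on S f \<Longrightarrow> continuous_on S (\<lambda>x. evec (f x))"
  unfolding evec_eq_axis by (intro continuous_intros)

lemma continuous_evec [continuous_intros]:
  fixes f :: "'a::t2_space \<Rightarrow> real"
  shows "continuous F f \<Longrightarrow> continuous F (\<lambda>x. evec (f x))"
  unfolding evec_eq_axis by (intro continuous_intros)

lemma norm_vec2_squared: "(norm (p::real^2))\<^sup>2 = (p$1)\<^sup>2 + (p$2)\<^sup>2"
  unfolding power2_norm_eq_inner by (simp add: inner_vec_def sum_2 power2_eq_square)

lemma norm_evec [simp]: "norm (evec t) = 1"
  using norm_vec2_squared[of "evec t"] norm_ge_zero[of "evec t"] by (auto simp: power2_eq_1_iff)

lemma inner_evec: "evec a \<bullet> evec b = cos (a - b)"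
  by (simp add: inner_vec_def sum_2 cos_diff)

lemma evec_add_2pi_multiple: "evec (t + 2*pi*real_of_int n) = evec t"
  unfolding evec_def using sin_cos_eq_iff by metis

lemma exists_shift_into_period: "\<exists>k::int. a \<le> t - 2*pi*k \<and> t - 2*pi*k < a + 2*pi"
proof
  define k where "k = \<lfloor>(t - a) / (2*pi)\<rfloor>"
  have "real_of_int k \<le> (t - a) / (2*pi)" "(t - a) / (2*pi) < real_of_int k + 1"
    unfolding k_def by linarith+
  then show "a \<le> t - 2*pi*k \<and> t - 2*pi*k < a + 2*pi"
    by (simp add: pos_le_divide_eq pos_divide_less_eq algebra_simps)
qed

lemma vec2_polar_decomposition:
  assumes "p \<noteq> (0::real^2)"
  obtains t where "0 \<le> t" "t < 2*pi" "p = norm p *\<^sub>R evec t"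
proof -
  have r: "0 < norm p" using assms by simp
  have "(p$1 / norm p)\<^sup>2 + (p$2 / norm p)\<^sup>2 = 1"
    using r by (simp add: power_divide flip: add_divide_distrib norm_vec2_squared)
  then obtain t where t: "0 \<le> t" "t < 2*pi" "p$1 / norm p = cos t" "p$2 / norm p = sin t"
    by (rule sincos_total_2pi)
  then have "norm p * cos t = p$1" "norm p * sin t = p$2"
    using r by (simp_all add: field_simps)
  then have "p = norm p *\<^sub>R evec t"
    by (simp add: vec_eq_iff forall_2)
  with t show thesis using that by blast
qed

lemma cos_eq_1_iff_abs_less_2pi:
  assumes "\<bar>t\<bar> < 2*pi"
  shows "cos t = 1 \<longleftrightarrow> t = 0"
proof
  assume "cos t = 1"
  then have "sin (t/2) = 0" using cos_double_sin[of "t/2"] by simp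
  moreover have "\<bar>t/2\<bar> < pi" using assms by linarith
  ultimately show "t = 0" using sin_zero_pi_iff[of "t/2"] by simp
qed simp

definition vec2_of_pair :: "real \<times> real \<Rightarrow> real^2" where
  "vec2_of_pair p = fst p *\<^sub>R axis 1 1 + snd p *\<^sub>R axis 2 1"

lemma vec2_of_pair_nth [simp]: "vec2_of_pair p $ 1 = fst p" "vec2_of_pair p $ 2 = snd p"
  by (auto simp: vec2_of_pair_def axis_def)

lemma borel_measurable_vec2_of_pair [measurable]: "vec2_of_pair \<in> borel_measurable borel"
  unfolding vec2_of_pair_def by (rule borel_measurable_continuous_onI) (intro continuous_intros)

lemma borel_measurable_vec2_of_pair_lborel_pair [measurable]:
  "vec2_of_pair \<in> borel_measurable (lborel \<Otimes>\<^sub>M lborel)"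
proof -
  have "sets (lborel \<Otimes>\<^sub>M lborel :: (real \<times> real) measure) = sets borel"
    by (subst lborel_prod) simp
  then show ?thesis by (simp cong: measurable_cong_sets)
qed

lemma distr_vec2_of_pair_lborel: "distr (lborel \<Otimes>\<^sub>M lborel) borel vec2_of_pair = lborel"
proof (rule lborel_eqI[symmetric])
  fix l u :: "real^2"
  assume lu: "\<And>b. b \<in> Basis \<Longrightarrow> l \<bullet> b \<le> u \<bullet> b"
  have l1: "l$1 \<le> u$1" and l2: "l$2 \<le> u$2"
    using lu[of "axis 1 1"] lu[of "axis 2 1"] by (auto simp: Basis_vec_def inner_axis)
  have "vec2_of_pair -` box l u = {l$1<..<u$1} \<times> {l$2<..<u$2}"
    by (auto simp: box_def Basis_vec_def inner_axis forall_2)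
  then have "emeasure (distr (lborel \<Otimes>\<^sub>M lborel) borel vec2_of_pair) (box l u)
      = emeasure (lborel \<Otimes>\<^sub>M lborel) ({l$1<..<u$1} \<times> {l$2<..<u$2})"
    by (subst emeasure_distr) (auto simp: space_pair_measure)
  also have "\<dots> = ennreal ((u$1 - l$1) * (u$2 - l$2))"
    using l1 l2 by (simp add: lborel.emeasure_pair_measure_Times ennreal_mult)
  also have "(u$1 - l$1) * (u$2 - l$2) = (\<Prod>b\<in>Basis. (u - l) \<bullet> b)"
  proof -
    have B: "(Basis :: (real^2) set) = {axis 1 1, axis 2 1}"
      by (auto simp: Basis_vec_def UNIV_2)
    show ?thesis unfolding B by (simp add: axis_eq_axis inner_axis)
  qed
  finally show "emeasure (distr (lborel \<Otimes>\<^sub>M lborel) borel vec2_of_pair) (box l u)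
      = ennreal (\<Prod>b\<in>Basis. (u - l) \<bullet> b)" .
qed simp

lemma nn_integral_lborel_vec2:
  assumes [measurable]: "f \<in> borel_measurable borel"
  shows "(\<integral>\<^sup>+v. f v \<partial>lborel) = (\<integral>\<^sup>+b. (\<integral>\<^sup>+a. f (vec2_of_pair (a, b)) \<partial>lborel) \<partial>lborel)"
proof -
  have "(\<integral>\<^sup>+v. f v \<partial>lborel) = (\<integral>\<^sup>+v. f v \<partial>distr (lborel \<Otimes>\<^sub>M lborel) borel vec2_of_pair)"
    by (simp add: distr_vec2_of_pair_lborel)
  also have "\<dots> = (\<integral>\<^sup>+z. f (vec2_of_pair z) \<partial>(lborel \<Otimes>\<^sub>M lborel))"
    by (subst nn_integral_distr) auto
  also have "\<dots> = (\<integral>\<^sup>+b. (\<integral>\<^sup>+a. f (vec2_of_pair (a, b)) \<partial>lborel) \<partial>lborel)"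
    by (subst lborel_pair.nn_integral_snd[symmetric]) auto
  finally show ?thesis .
qed

definition polar_to_cart :: "real^2 \<Rightarrow> real^2" where
  "polar_to_cart v = v$1 *\<^sub>R evec (v$2)"

lemma continuous_on_polar_to_cart: "continuous_on S polar_to_cart"
  unfolding polar_to_cart_def by (intro continuous_intros)

lemma borel_measurable_polar_to_cart [measurable]: "polar_to_cart \<in> borel_measurable borel"
  by (rule borel_measurable_continuous_onI[OF continuous_on_polar_to_cart])

definition polar_to_cart_deriv :: "real^2 \<Rightarrow> real^2 \<Rightarrow> real^2" where
  "polar_to_cart_deriv v h = h$1 *\<^sub>R evec (v$2) + (v$1 * h$2) *\<^sub>R evec (v$2 + pi/2)"

lemma polar_to_cart_has_derivative: "(polar_to_cart has_derivative polar_to_cart_deriv v) (at v)"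
proof -
  have cart: "polar_to_cart = (\<lambda>v. (v$1 * cos (v$2)) *\<^sub>R axis 1 1 + (v$1 * sin (v$2)) *\<^sub>R axis 2 1)"
    by (auto simp: polar_to_cart_def evec_eq_axis algebra_simps)
  have deriv: "polar_to_cart_deriv v = (\<lambda>h. (h$1 * cos (v$2) - v$1 * sin (v$2) * h$2) *\<^sub>R axis 1 1
      + (h$1 * sin (v$2) + v$1 * cos (v$2) * h$2) *\<^sub>R axis 2 1)"
    by (auto simp: polar_to_cart_deriv_def evec_eq_axis cos_add sin_add algebra_simps)
  show ?thesis unfolding cart deriv
    by (auto intro!: derivative_eq_intros bounded_linear.has_derivative[OF bounded_linear_vec_nth]
        simp: algebra_simps)
qed

lemma det_polar_to_cart_deriv: "det (matrix (polar_to_cart_deriv v)) = v$1"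
proof -
  have "det (matrix (polar_to_cart_deriv v)) = v$1 * (cos (v$2))\<^sup>2 + v$1 * (sin (v$2))\<^sup>2"
    by (simp add: det_2 matrix_def polar_to_cart_deriv_def axis_def cos_add sin_add algebra_simps
        flip: power2_eq_square)
  also have "\<dots> = v$1" by (simp flip: distrib_left)
  finally show ?thesis .
qed

lemma inj_on_polar_to_cart: "inj_on polar_to_cart {v. 0 < v$1 \<and> 0 < v$2 \<and> v$2 < 2*pi}"
proof (rule inj_onI)
  fix v w :: "real^2"
  assume v: "v \<in> {v. 0 < v$1 \<and> 0 < v$2 \<and> v$2 < 2*pi}"
    and w: "w \<in> {v. 0 < v$1 \<and> 0 < v$2 \<and> v$2 < 2*pi}"
    and eq: "polar_to_cart v = polar_to_cart w"
  have "norm (polar_to_cart v) = v$1" "norm (polar_to_cart w) = w$1"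
    using v w by (simp_all add: polar_to_cart_def)
  with eq have 1: "v$1 = w$1" by simp
  with eq v have "evec (v$2) = evec (w$2)"
    by (simp add: polar_to_cart_def)
  then have "cos (v$2 - w$2) = 1"
    using inner_evec[of "v$2" "w$2"] inner_evec[of "w$2" "w$2"] by simp
  moreover have "\<bar>v$2 - w$2\<bar> < 2*pi" using v w by auto
  ultimately have "v$2 = w$2" using cos_eq_1_iff_abs_less_2pi by simp
  with 1 show "v = w" by (simp add: vec_eq_iff forall_2)
qed

lemma polar_to_cart_image:
  "polar_to_cart ` {v. 0 < v$1 \<and> 0 < v$2 \<and> v$2 < 2*pi \<and> polar_to_cart v \<in> K}
    = K - {p. p$2 = 0 \<and> 0 \<le> p$1}"
proof (intro equalityI subsetI)
  fix p assume "p \<in> polar_to_cart ` {v. 0 < v$1 \<and> 0 < v$2 \<and> v$2 < 2*pi \<and> polar_to_cart v \<in> K}"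
  then obtain v where v: "0 < v$1" "0 < v$2" "v$2 < 2*pi" "polar_to_cart v \<in> K"
    and p: "p = polar_to_cart v" by blast
  have "cos (v$2) \<noteq> 1" using v cos_eq_1_iff_abs_less_2pi[of "v$2"] by simp
  moreover have "(cos (v$2))\<^sup>2 = 1" if "sin (v$2) = 0"
    using that sin_cos_squared_add[of "v$2"] by simp
  ultimately have "\<not> (sin (v$2) = 0 \<and> 0 \<le> cos (v$2))"
    by (auto simp: power2_eq_1_iff)
  then show "p \<in> K - {p. p$2 = 0 \<and> 0 \<le> p$1}"
    using v p by (auto simp: polar_to_cart_def zero_le_mult_iff)
next
  fix p assume p: "p \<in> K - {p. p$2 = 0 \<and> 0 \<le> p$1}"
  then have "p \<noteq> 0" by auto
  then obtain t where t: "0 \<le> t" "t < 2*pi" "p = norm p *\<^sub>R evec t"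
    by (rule vec2_polar_decomposition)
  have "t \<noteq> 0"
  proof
    assume "t = 0"
    then have "p$2 = 0" "p$1 = norm p"
      using arg_cong[OF t(3), of "\<lambda>q. q$2"] arg_cong[OF t(3), of "\<lambda>q. q$1"] by simp_all
    with p show False by simp
  qed
  moreover have "p = polar_to_cart (vec2_of_pair (norm p, t))"
    using t by (simp add: polar_to_cart_def)
  ultimately show "p \<in> polar_to_cart ` {v. 0 < v$1 \<and> 0 < v$2 \<and> v$2 < 2*pi \<and> polar_to_cart v \<in> K}"
    using t p \<open>p \<noteq> 0\<close> by (intro image_eqI[of _ _ "vec2_of_pair (norm p, t)"]) auto
qed

lemma emeasure_lebesgue_polar:
  fixes K :: "(real^2) set"
  assumes K [measurable]: "K \<in> sets borel" and "bounded K"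
  shows "emeasure lebesgue K = (\<integral>\<^sup>+\<theta>. indicator {0..2*pi} \<theta> *
      (\<integral>\<^sup>+r. ennreal r * indicator {r. 0 < r \<and> r *\<^sub>R evec \<theta> \<in> K} r \<partial>lborel) \<partial>lborel)"
proof -
  define S where "S = {v::real^2. 0 < v$1 \<and> 0 < v$2 \<and> v$2 < 2*pi \<and> polar_to_cart v \<in> K}"
  define L where "L = {p::real^2. p$2 = 0 \<and> 0 \<le> p$1}"
  have [measurable]: "S \<in> sets borel"
    unfolding S_def by measurable
  have "negligible {p::real^2. axis 2 1 \<bullet> p = 0}"
    by (rule negligible_hyperplane) (simp add: axis_eq_0_iff)
  then have "negligible L"
    by (rule negligible_subset) (auto simp: L_def inner_axis')
  then have L_null: "L \<in> null_sets lebesgue"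
    by (simp add: negligible_iff_null_sets)
  have KL: "K - L \<in> lmeasurable"
    using L_null \<open>bounded K\<close> by (intro bounded_set_imp_lmeasurable) (auto intro: bounded_subset)
  have "emeasure lebesgue K = emeasure lebesgue (K - L)"
    using L_null by (simp add: emeasure_Diff_null_set)
  also have "\<dots> = (\<integral>\<^sup>+v. ennreal (indicator S v * \<bar>v$1\<bar>) \<partial>lborel)"
  proof -
    have "((\<lambda>v. \<bar>det (matrix (polar_to_cart_deriv v))\<bar>) has_integral measure lebesgue (K - L)) S"
      using has_measure_differentiable_image[of S polar_to_cart polar_to_cart_deriv]
        polar_to_cart_has_derivative inj_on_polar_to_cart KL polar_to_cart_image[of K]
      by (force simp: S_def L_def has_derivative_at_withinI intro: inj_on_subset)
    then have "((\<lambda>v. \<bar>v$1\<bar>) has_integral measure lebesgue (K - L)) S"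
      by (simp add: det_polar_to_cart_deriv)
    from nn_integral_has_integral_lebesgue[OF _ this] show ?thesis
      using KL by (simp add: emeasure_eq_measure2)
  qed
  also have "\<dots> = (\<integral>\<^sup>+\<theta>. (\<integral>\<^sup>+r. ennreal (indicator S (vec2_of_pair (r, \<theta>)) * \<bar>r\<bar>) \<partial>lborel) \<partial>lborel)"
    by (subst nn_integral_lborel_vec2) auto
  also have "\<dots> = (\<integral>\<^sup>+\<theta>. indicator {0..2*pi} \<theta> *
      (\<integral>\<^sup>+r. ennreal r * indicator {r. 0 < r \<and> r *\<^sub>R evec \<theta> \<in> K} r \<partial>lborel) \<partial>lborel)"
  proof (rule nn_integral_cong_AE)
    have "AE \<theta> in lborel. \<theta> \<noteq> 0 \<and> \<theta> \<noteq> 2*pi"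
      using AE_lborel_singleton[of 0] AE_lborel_singleton[of "2*pi"] by eventually_elim simp
    then show "AE \<theta> in lborel. (\<integral>\<^sup>+r. ennreal (indicator S (vec2_of_pair (r, \<theta>)) * \<bar>r\<bar>) \<partial>lborel)
        = indicator {0..2*pi} \<theta> * (\<integral>\<^sup>+r. ennreal r * indicator {r. 0 < r \<and> r *\<^sub>R evec \<theta> \<in> K} r \<partial>lborel)"
    proof eventually_elim
      fix \<theta> :: real
      assume "\<theta> \<noteq> 0 \<and> \<theta> \<noteq> 2*pi"
      then have pointwise: "ennreal (indicator S (vec2_of_pair (r, \<theta>)) * \<bar>r\<bar>)
          = indicator {0..2*pi} \<theta> * (ennreal r * indicator {r. 0 < r \<and> r *\<^sub>R evec \<theta> \<in> K} r)" for r
        by (auto simp: S_def polar_to_cart_def indicator_def)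
      then show "(\<integral>\<^sup>+r. ennreal (indicator S (vec2_of_pair (r, \<theta>)) * \<bar>r\<bar>) \<partial>lborel)
          = indicator {0..2*pi} \<theta> * (\<integral>\<^sup>+r. ennreal r * indicator {r. 0 < r \<and> r *\<^sub>R evec \<theta> \<in> K} r \<partial>lborel)"
        unfolding pointwise by (cases "\<theta> \<in> {0..2*pi}") simp_all
    qed
  qed
  finally show ?thesis .
qed

lemma nn_integral_id_ereal_interval:
  fixes A B :: ereal
  assumes "0 \<le> A" "A < \<infinity>" "0 \<le> B"
  shows "(\<integral>\<^sup>+r. ennreal r * indicator {r. 0 < r \<and> ereal r \<le> A \<and> B \<le> ereal r} r \<partial>lborel)
     = e2ennreal (A\<^sup>2 - B\<^sup>2) / 2"
proof -
  obtain a where a: "A = ereal a" "0 \<le> a" using assms by (cases A) auto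
  show ?thesis
  proof (cases "B \<le> A")
    case False
    then have "{r. 0 < r \<and> ereal r \<le> A \<and> B \<le> ereal r} = {}" by auto
    moreover have "A\<^sup>2 - B\<^sup>2 \<le> 0"
      using False a by (cases B) (auto simp: power2_eq_square intro: mult_mono)
    ultimately show ?thesis by (simp add: e2ennreal_neg)
  next
    case True
    then obtain b where b: "B = ereal b" "0 \<le> b" "b \<le> a" using assms a by (cases B) auto
    have "(\<integral>\<^sup>+r. ennreal r * indicator {r. 0 < r \<and> ereal r \<le> A \<and> B \<le> ereal r} r \<partial>lborel)
        = (\<integral>\<^sup>+r. ennreal r * indicator {b..a} r \<partial>lborel)"
      using AE_lborel_singleton[of 0] a b
      by (intro nn_integral_cong_AE) (auto elim!: eventually_mono simp: indicator_def)
    also have "\<dots> = ennreal (a\<^sup>2/2 - b\<^sup>2/2)"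
      using b by (intro nn_integral_FTC_Icc[where F="\<lambda>r. r\<^sup>2/2"]) (auto intro!: derivative_eq_intros)
    also have "\<dots> = e2ennreal (A\<^sup>2 - B\<^sup>2) / 2"
      using a b power_mono[of b a 2] divide_ennreal[of "a\<^sup>2 - b\<^sup>2" 2]
      by (simp add: e2ennreal_ereal diff_divide_distrib)
    finally show ?thesis .
  qed
qed

section \<open>One-sided directional derivatives of convex functions\<close>

lemma convex_on_along_line:
  fixes u :: "'a::real_vector \<Rightarrow> real"
  assumes "convex_on \<Omega> u"
  shows "convex_on {t. x + t *\<^sub>R e \<in> \<Omega>} (\<lambda>t. u (x + t *\<^sub>R e))"
proof -
  have line: "x + ((1 - c) * s + c * t) *\<^sub>R e = (1 - c) *\<^sub>R (x + s *\<^sub>R e) + c *\<^sub>R (x + t *\<^sub>R e)"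
    for c s t :: real
    by (simp add: algebra_simps)
  show ?thesis
  proof (rule convex_onI)
    show "convex {t. x + t *\<^sub>R e \<in> \<Omega>}"
      unfolding convex_alt
      using convexD_alt[OF convex_on_imp_convex[OF assms]] by (simp add: line)
  qed (use convex_onD[OF assms] in \<open>simp add: line\<close>)
qed

lemma convex_on_slope_mono:
  fixes u :: "'a::real_vector \<Rightarrow> real"
  assumes "convex_on \<Omega> u" "x \<in> \<Omega>" "x + s *\<^sub>R e \<in> \<Omega>" "0 < r" "r \<le> s"
  shows "(u (x + r *\<^sub>R e) - u x) / r \<le> (u (x + s *\<^sub>R e) - u x) / s"
proof (cases "r = s")
  case False
  then show ?thesis
    using convex_on_slope_le(1)[OF convex_on_along_line[OF assms(1), of x e], of 0 s r] assms
    by (simp add: diff_divide_distrib)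
qed simp

lemma convex_on_slope_backward_le_forward:
  fixes u :: "'a::real_vector \<Rightarrow> real"
  assumes "convex_on \<Omega> u" "x - t *\<^sub>R e \<in> \<Omega>" "x + r *\<^sub>R e \<in> \<Omega>" "0 < t" "0 < r"
  shows "(u x - u (x - t *\<^sub>R e)) / t \<le> (u (x + r *\<^sub>R e) - u x) / r"
  using convex_on_slope_le[OF convex_on_along_line[OF assms(1), of x e], of "-t" r 0] assms
  by (simp add: diff_divide_distrib)

lemma tendsto_at_right_Inf_mono_on:
  fixes f :: "real \<Rightarrow> real"
  assumes mono: "mono_on {a<..<b} f" and bdd: "bdd_below (f ` {a<..<b})" and "a < b"
  shows "(f \<longlongrightarrow> Inf (f ` {a<..<b})) (at_right a)"
proof (rule order_tendstoI)
  fix c assume "c < Inf (f ` {a<..<b})"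
  then have "c < f r" if "r \<in> {a<..<b}" for r
    using cInf_lower[OF _ bdd, of "f r"] that by fastforce
  then show "eventually (\<lambda>r. c < f r) (at_right a)"
    using eventually_at_right_real[OF \<open>a < b\<close>] by (auto elim: eventually_mono)
next
  fix c assume "Inf (f ` {a<..<b}) < c"
  then obtain s where s: "s \<in> {a<..<b}" "f s < c"
    using cInf_less_iff[OF _ bdd] \<open>a < b\<close> by auto
  have "f r < c" if "r \<in> {a<..<s}" for r
    using mono_onD[OF mono, of r s] that s by auto
  then show "eventually (\<lambda>r. f r < c) (at_right a)"
    using eventually_at_right_real[of a s] s by (auto elim: eventually_mono)
qed

lemma convex_on_directional_slope_tendsto:
  fixes u :: "'a::real_normed_vector \<Rightarrow> real"
  assumes "convex_on \<Omega> u" "open \<Omega>" "x \<in> \<Omega>"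
  shows "\<exists>l. ((\<lambda>r. (u (x + r *\<^sub>R e) - u x) / r) \<longlongrightarrow> l) (at_right 0)"
proof -
  obtain \<epsilon> where \<epsilon>: "0 < \<epsilon>" "ball x \<epsilon> \<subseteq> \<Omega>"
    using assms openE by blast
  define \<delta> where "\<delta> = \<epsilon> / (norm e + 1)"
  have norm_e1_pos: "0 < norm e + 1" by (simp add: add_nonneg_pos)
  have \<delta>: "0 < \<delta>" using \<epsilon> norm_e1_pos by (simp add: \<delta>_def)
  have line: "x + r *\<^sub>R e \<in> \<Omega>" if "\<bar>r\<bar> < \<delta>" for r
  proof -
    have "\<bar>r\<bar> * norm e \<le> \<bar>r\<bar> * (norm e + 1)" by (simp add: mult_left_mono)
    also have "\<dots> < \<epsilon>" using that norm_e1_pos by (simp add: \<delta>_def pos_less_divide_eq)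
    finally show ?thesis using \<epsilon> by (auto simp: dist_norm)
  qed
  define Q where "Q r = (u (x + r *\<^sub>R e) - u x) / r" for r
  have "mono_on {0<..<\<delta>} Q"
    using convex_on_slope_mono[OF assms(1,3)] line by (auto intro!: mono_onI simp: Q_def)
  moreover have "x - (\<delta>/2) *\<^sub>R e \<in> \<Omega>"
    using line[of "-(\<delta>/2)"] \<delta> by simp
  then have "bdd_below (Q ` {0<..<\<delta>})"
    using convex_on_slope_backward_le_forward[OF assms(1), of x "\<delta>/2" e] line \<delta>
    by (intro bdd_belowI2[where m="(u x - u (x - (\<delta>/2) *\<^sub>R e)) / (\<delta>/2)"])
       (auto simp: Q_def)
  ultimately show ?thesis
    using tendsto_at_right_Inf_mono_on \<delta> unfolding Q_def by blast
qed

section \<open>The subgradient of a planar convex function\<close>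

lemma closed_subgrad: "closed (subgrad u \<Omega> x)"
proof -
  have "subgrad u \<Omega> x = (\<Inter>z\<in>\<Omega>. {p. (z - x) \<bullet> p \<le> u z - u x})"
    by (auto simp: subgrad_def inner_commute algebra_simps)
  then show ?thesis by (auto intro!: closed_INT closed_halfspace_le)
qed

lemma dirderiv_add_2pi_multiple: "dirderiv u x (\<theta> + 2*pi*real_of_int n) = dirderiv u x \<theta>"
  by (simp add: dirderiv_def evec_add_2pi_multiple)

lemma cos_pos_half_period: "\<phi> \<in> {\<theta> - pi/2 <..< \<theta> + pi/2} \<Longrightarrow> 0 < cos (\<theta> - \<phi>)"
  by (rule cos_gt_zero_pi) auto

lemma Rplus_nonneg: "0 \<le> Rplus u x \<theta>"
  unfolding Rplus_def le_INF_iff by (auto intro!: divide_nonneg_pos cos_pos_half_period)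

lemma Rplus_less_infinity: "Rplus u x \<theta> < \<infinity>"
proof -
  have "Rplus u x \<theta> \<le> ereal (max (dirderiv u x \<theta>) 0 / cos (\<theta> - \<theta>))"
    unfolding Rplus_def by (rule INF_lower) auto
  also have "\<dots> < \<infinity>" by (simp del: ereal_max)
  finally show ?thesis .
qed

lemma Rminus_nonneg: "0 \<le> Rminus u x \<theta>"
proof -
  have "ereal (max (- dirderiv u x (\<theta> + pi)) 0 / cos (\<theta> - \<theta>)) \<le> Rminus u x \<theta>"
    unfolding Rminus_def by (rule SUP_upper) auto
  then show ?thesis by (rule order_trans[rotated]) (simp del: ereal_max)
qed

lemma le_Rplus_iff:
  assumes "0 < r"
  shows "ereal r \<le> Rplus u x \<theta> \<longleftrightarrow>
    (\<forall>\<phi>\<in>{\<theta> - pi/2 <..< \<theta> + pi/2}. r * cos (\<theta> - \<phi>) \<le> dirderiv u x \<phi>)"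
proof -
  have "r \<le> max (dirderiv u x \<phi>) 0 / cos (\<theta> - \<phi>) \<longleftrightarrow> r * cos (\<theta> - \<phi>) \<le> dirderiv u x \<phi>"
    if "\<phi> \<in> {\<theta> - pi/2 <..< \<theta> + pi/2}" for \<phi>
    using cos_pos_half_period[OF that] mult_pos_pos[OF assms cos_pos_half_period[OF that]]
    by (auto simp: pos_le_divide_eq max_def)
  then show ?thesis unfolding Rplus_def le_INF_iff by simp
qed

lemma Rminus_le_iff:
  assumes "0 \<le> r"
  shows "Rminus u x \<theta> \<le> ereal r \<longleftrightarrow>
    (\<forall>\<phi>\<in>{\<theta> - pi/2 <..< \<theta> + pi/2}. r * cos (\<theta> - (\<phi> + pi)) \<le> dirderiv u x (\<phi> + pi))"
proof -
  have "max (- dirderiv u x (\<phi> + pi)) 0 / cos (\<theta> - \<phi>) \<le> r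
      \<longleftrightarrow> r * cos (\<theta> - (\<phi> + pi)) \<le> dirderiv u x (\<phi> + pi)"
    if "\<phi> \<in> {\<theta> - pi/2 <..< \<theta> + pi/2}" for \<phi>
  proof -
    have "cos (\<theta> - (\<phi> + pi)) = - cos (\<theta> - \<phi>)"
      using cos_minus_pi[of "\<theta> - \<phi>"] by (simp add: algebra_simps)
    then show ?thesis
      using cos_pos_half_period[OF that] assms by (auto simp: pos_divide_le_eq)
  qed
  then show ?thesis unfolding Rminus_def SUP_le_iff by simp
qed

context
  fixes u :: "real^2 \<Rightarrow> real" and \<Omega> :: "(real^2) set" and x :: "real^2"
  assumes convex: "convex_on \<Omega> u" and "open \<Omega>" and "x \<in> \<Omega>"
begin

lemma tendsto_dirderiv:
  "((\<lambda>r. (u (x + r *\<^sub>R evec \<theta>) - u x) / r) \<longlongrightarrow> dirderiv u x \<theta>) (at_right 0)"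
proof -
  obtain l where l: "((\<lambda>r. (u (x + r *\<^sub>R evec \<theta>) - u x) / r) \<longlongrightarrow> l) (at_right 0)"
    using convex_on_directional_slope_tendsto[OF convex \<open>open \<Omega>\<close> \<open>x \<in> \<Omega>\<close>] by blast
  moreover from l have "dirderiv u x \<theta> = l"
    unfolding dirderiv_def by (simp add: tendsto_Lim)
  ultimately show ?thesis by simp
qed

lemma dirderiv_le_slope:
  assumes "0 < s" "x + s *\<^sub>R evec \<theta> \<in> \<Omega>"
  shows "dirderiv u x \<theta> \<le> (u (x + s *\<^sub>R evec \<theta>) - u x) / s"
proof (rule tendsto_upperbound[OF tendsto_dirderiv])
  show "\<forall>\<^sub>F r in at_right 0. (u (x + r *\<^sub>R evec \<theta>) - u x) / r \<le> (u (x + s *\<^sub>R evec \<theta>) - u x) / s"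
    using eventually_at_right_real[OF \<open>0 < s\<close>]
      convex_on_slope_mono[OF convex \<open>x \<in> \<Omega>\<close> assms(2)]
    by (auto elim: eventually_mono)
qed simp

lemma inner_evec_le_dirderiv:
  assumes "p \<in> subgrad u \<Omega> x"
  shows "p \<bullet> evec \<theta> \<le> dirderiv u x \<theta>"
proof (rule tendsto_lowerbound[OF tendsto_dirderiv])
  obtain \<delta> where \<delta>: "0 < \<delta>" "ball x \<delta> \<subseteq> \<Omega>"
    using \<open>open \<Omega>\<close> \<open>x \<in> \<Omega>\<close> openE by blast
  have "p \<bullet> evec \<theta> \<le> (u (x + r *\<^sub>R evec \<theta>) - u x) / r" if "r \<in> {0<..<\<delta>}" for r
  proof -
    have "x + r *\<^sub>R evec \<theta> \<in> \<Omega>" using \<delta> that by (auto simp: dist_norm)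
    then have "u x + r * (p \<bullet> evec \<theta>) \<le> u (x + r *\<^sub>R evec \<theta>)"
      using assms by (auto simp: subgrad_def)
    then show ?thesis using that by (simp add: pos_le_divide_eq mult.commute)
  qed
  then show "\<forall>\<^sub>F r in at_right 0. p \<bullet> evec \<theta> \<le> (u (x + r *\<^sub>R evec \<theta>) - u x) / r"
    using eventually_at_right_real[OF \<open>0 < \<delta>\<close>] by (auto elim: eventually_mono)
qed simp

lemma subgrad_eq_dirderiv_halfplanes:
  "subgrad u \<Omega> x = {p. \<forall>\<theta>. p \<bullet> evec \<theta> \<le> dirderiv u x \<theta>}"
proof (intro equalityI subsetI CollectI allI)
  fix p \<theta> assume "p \<in> subgrad u \<Omega> x"
  then show "p \<bullet> evec \<theta> \<le> dirderiv u x \<theta>" by (rule inner_evec_le_dirderiv)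
next
  fix p assume p: "p \<in> {p. \<forall>\<theta>. p \<bullet> evec \<theta> \<le> dirderiv u x \<theta>}"
  have "u x + p \<bullet> (z - x) \<le> u z" if "z \<in> \<Omega>" for z
  proof (cases "z = x")
    case False
    obtain t where t: "z - x = norm (z - x) *\<^sub>R evec t"
      using vec2_polar_decomposition[of "z - x"] \<open>z \<noteq> x\<close> by auto
    define s where "s = norm (z - x)"
    have s: "0 < s" using \<open>z \<noteq> x\<close> by (simp add: s_def)
    have z: "z = x + s *\<^sub>R evec t" using t by (simp add: s_def algebra_simps)
    have "p \<bullet> (z - x) = s * (p \<bullet> evec t)" by (simp add: z)
    also have "\<dots> \<le> s * dirderiv u x t" using p s by simp
    also have "\<dots> \<le> u z - u x"
      using dirderiv_le_slope[of s t] s z \<open>z \<in> \<Omega>\<close> by (simp add: pos_le_divide_eq mult.commute)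
    finally show ?thesis by simp
  qed simp
  then show "p \<in> subgrad u \<Omega> x" by (auto simp: subgrad_def)
qed

lemma dirderiv_upper_semicontinuous:
  assumes "dirderiv u x \<theta>\<^sub>0 < c"
  shows "\<forall>\<^sub>F \<theta> in nhds \<theta>\<^sub>0. dirderiv u x \<theta> < c"
proof -
  obtain \<delta> where \<delta>: "0 < \<delta>" "ball x \<delta> \<subseteq> \<Omega>"
    using \<open>open \<Omega>\<close> \<open>x \<in> \<Omega>\<close> openE by blast
  have circle: "x + r *\<^sub>R evec t \<in> \<Omega>" if "r \<in> {0<..<\<delta>}" for r t
    using \<delta> that by (auto simp: dist_norm)
  have "\<forall>\<^sub>F r in at_right 0. (u (x + r *\<^sub>R evec \<theta>\<^sub>0) - u x) / r < c \<and> r \<in> {0<..<\<delta>}"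
    using order_tendstoD(2)[OF tendsto_dirderiv assms] eventually_at_right_real[OF \<open>0 < \<delta>\<close>]
    by eventually_elim simp
  then obtain r where r: "r \<in> {0<..<\<delta>}" "(u (x + r *\<^sub>R evec \<theta>\<^sub>0) - u x) / r < c"
    using eventually_happens[of _ "at_right (0::real)"] by auto
  have "isCont u (x + r *\<^sub>R evec \<theta>\<^sub>0)"
    using convex_on_continuous[OF \<open>open \<Omega>\<close> convex] circle[OF r(1)] \<open>open \<Omega>\<close>
    by (simp add: continuous_on_eq_continuous_at)
  moreover have "isCont (\<lambda>t. x + r *\<^sub>R evec t) \<theta>\<^sub>0"
    by (intro continuous_intros)
  ultimately have "isCont (\<lambda>t. u (x + r *\<^sub>R evec t)) \<theta>\<^sub>0"
    using isCont_o2 by blast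
  then have cont: "isCont (\<lambda>t. (u (x + r *\<^sub>R evec t) - u x) / r) \<theta>\<^sub>0"
    using r(1) by (intro continuous_intros) auto
  have le: "dirderiv u x t \<le> (u (x + r *\<^sub>R evec t) - u x) / r" for t
    using dirderiv_le_slope[of r t] circle[OF r(1)] r(1) by simp
  from order_tendstoD(2)[OF isContD[OF cont] r(2)]
  have "\<forall>\<^sub>F t in at \<theta>\<^sub>0. dirderiv u x t < c"
    by eventually_elim (rule le_less_trans[OF le])
  then show ?thesis
    using assms by (simp add: eventually_nhds_conv_at)
qed

lemma closed_dirderiv_superlevel: "closed {\<theta>. c \<le> dirderiv u x \<theta>}"
proof -
  have "\<exists>T. open T \<and> \<theta>\<^sub>0 \<in> T \<and> T \<subseteq> {\<theta>. dirderiv u x \<theta> < c}"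
    if "\<theta>\<^sub>0 \<in> {\<theta>. dirderiv u x \<theta> < c}" for \<theta>\<^sub>0
    using that dirderiv_upper_semicontinuous[of \<theta>\<^sub>0 c]
    unfolding eventually_nhds by auto
  then have "open {\<theta>. dirderiv u x \<theta> < c}"
    by (subst open_subopen) blast
  then have "closed (- {\<theta>. dirderiv u x \<theta> < c})"
    by (rule closed_Compl)
  then show ?thesis by (simp add: Compl_eq not_less)
qed

lemma bounded_subgrad: "bounded (subgrad u \<Omega> x)"
proof -
  obtain \<delta> where \<delta>: "0 < \<delta>" "cball x \<delta> \<subseteq> \<Omega>"
    using \<open>open \<Omega>\<close> \<open>x \<in> \<Omega>\<close> open_contains_cball by blast
  have "compact (u ` cball x \<delta>)"
    using convex_on_continuous[OF \<open>open \<Omega>\<close> convex] \<delta>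
    by (intro compact_continuous_image) (auto intro: continuous_on_subset)
  then have "bounded (u ` cball x \<delta>)" by (rule compact_imp_bounded)
  then obtain M where "\<forall>y \<in> u ` cball x \<delta>. norm y \<le> M"
    unfolding bounded_iff by blast
  then have M: "\<And>z. z \<in> cball x \<delta> \<Longrightarrow> \<bar>u z\<bar> \<le> M" by auto
  have "norm p \<le> 2 * M / \<delta>" if p: "p \<in> subgrad u \<Omega> x" for p
  proof (cases "p = 0")
    case True
    then show ?thesis using M[of x] \<delta> by simp
  next
    case False
    define z where "z = x + (\<delta> / norm p) *\<^sub>R p"
    have z: "z \<in> cball x \<delta>" using False \<delta> by (simp add: z_def dist_norm)
    have "\<delta> * norm p = p \<bullet> (z - x)"
      using False by (simp add: z_def dot_square_norm power2_eq_square)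
    also have "\<dots> \<le> u z - u x" using p z \<delta> by (force simp: subgrad_def)
    also have "\<dots> \<le> 2 * M" using M[OF z] M[of x] \<delta> by (auto simp: abs_le_iff)
    finally show ?thesis using \<delta> by (simp add: pos_le_divide_eq mult.commute)
  qed
  then show ?thesis unfolding bounded_iff by blast
qed

lemma ray_mem_subgrad_iff:
  assumes "0 < r"
  shows "r *\<^sub>R evec \<theta> \<in> subgrad u \<Omega> x \<longleftrightarrow> ereal r \<le> Rplus u x \<theta> \<and> Rminus u x \<theta> \<le> ereal r"
proof -
  let ?I = "{\<theta> - pi/2 <..< \<theta> + pi/2}"
  let ?H = "\<lambda>\<phi>. r * cos (\<theta> - \<phi>) \<le> dirderiv u x \<phi>"
  have "r *\<^sub>R evec \<theta> \<in> subgrad u \<Omega> x \<longleftrightarrow> (\<forall>\<phi>. ?H \<phi>)"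
    by (simp add: subgrad_eq_dirderiv_halfplanes inner_evec)
  moreover have "(\<forall>\<phi>. ?H \<phi>) \<longleftrightarrow> (\<forall>\<phi>\<in>?I. ?H \<phi>) \<and> (\<forall>\<phi>\<in>?I. ?H (\<phi> + pi))"
  proof
    assume "\<forall>\<phi>. ?H \<phi>"
    then show "(\<forall>\<phi>\<in>?I. ?H \<phi>) \<and> (\<forall>\<phi>\<in>?I. ?H (\<phi> + pi))" by blast
  next
    assume "(\<forall>\<phi>\<in>?I. ?H \<phi>) \<and> (\<forall>\<phi>\<in>?I. ?H (\<phi> + pi))"
    then have front: "\<forall>\<phi>\<in>?I. ?H \<phi>" and opposite: "\<forall>\<phi>\<in>?I. ?H (\<phi> + pi)" by blast+
    \<comment> \<open>At \<theta> \<plusminus> \<pi>/2 the cosine vanishes; nonnegativity of the derivative there is inherited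
       from the open half circle by upper semicontinuity.\<close>
    have "?I \<subseteq> {\<phi>. 0 \<le> dirderiv u x \<phi>}"
      using front cos_pos_half_period \<open>0 < r\<close> by (fastforce intro: order_trans[rotated])
    then have "closure ?I \<subseteq> {\<phi>. 0 \<le> dirderiv u x \<phi>}"
      by (rule closure_minimal) (rule closed_dirderiv_superlevel)
    then have half_circle_nonneg: "0 \<le> dirderiv u x \<psi>" if "\<psi> \<in> {\<theta> - pi/2 .. \<theta> + pi/2}" for \<psi>
      using that by auto
    show "\<forall>\<phi>. ?H \<phi>"
    proof
      fix \<phi>
      obtain k :: int where k: "\<theta> - pi/2 \<le> \<phi> - 2*pi*k" "\<phi> - 2*pi*k < \<theta> - pi/2 + 2*pi"
        using exists_shift_into_period by blast
      define \<psi> where "\<psi> = \<phi> - 2*pi*k"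
      consider "\<psi> \<in> ?I" | "\<psi> - pi \<in> ?I" | "\<psi> = \<theta> - pi/2 \<or> \<psi> = \<theta> + pi/2"
        using k unfolding \<psi>_def by fastforce
      then have "?H \<psi>"
      proof cases
        case 2
        then show ?thesis using opposite by fastforce
      next
        case 3
        then show ?thesis using half_circle_nonneg[of \<psi>] by auto
      qed (use front in blast)
      moreover have \<phi>: "\<phi> = \<psi> + 2*pi*k" by (simp add: \<psi>_def)
      moreover have "cos (\<theta> - \<phi>) = cos (\<theta> - \<psi>)"
        using inner_evec[of \<theta> \<phi>] inner_evec[of \<theta> \<psi>] evec_add_2pi_multiple[of \<psi> k] by (simp add: \<phi>)
      ultimately show "?H \<phi>" by (simp add: dirderiv_add_2pi_multiple)
    qed
  qed
  ultimately show ?thesis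
    using le_Rplus_iff[OF assms] Rminus_le_iff[of r] assms by simp
qed

end

theorem theorem3p8:
  fixes u :: "real^2 \<Rightarrow> real" and \<Omega> :: "(real^2) set"
  assumes "open \<Omega>" and "convex \<Omega>" and "convex_on \<Omega> u" and "x \<in> \<Omega>"
  shows "emeasure lebesgue (subgrad u \<Omega> x) =
    (\<integral>\<^sup>+ \<theta>. indicator {0..2*pi} \<theta> *
        e2ennreal ((Rplus u x \<theta>)\<^sup>2 - (Rminus u x \<theta>)\<^sup>2) / 2 \<partial>lborel)"
proof -
  note convex = \<open>convex_on \<Omega> u\<close> \<open>open \<Omega>\<close> \<open>x \<in> \<Omega>\<close>
  have "emeasure lebesgue (subgrad u \<Omega> x) = (\<integral>\<^sup>+\<theta>. indicator {0..2*pi} \<theta> *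
      (\<integral>\<^sup>+r. ennreal r * indicator {r. 0 < r \<and> r *\<^sub>R evec \<theta> \<in> subgrad u \<Omega> x} r \<partial>lborel) \<partial>lborel)"
    using closed_subgrad bounded_subgrad[OF convex] by (intro emeasure_lebesgue_polar) auto
  also have "\<dots> = (\<integral>\<^sup>+\<theta>. indicator {0..2*pi} \<theta> *
      (\<integral>\<^sup>+r. ennreal r * indicator {r. 0 < r \<and> ereal r \<le> Rplus u x \<theta> \<and> Rminus u x \<theta> \<le> ereal r} r \<partial>lborel) \<partial>lborel)"
    using ray_mem_subgrad_iff[OF convex] by (simp cong: conj_cong)
  also have "\<dots> = (\<integral>\<^sup>+ \<theta>. indicator {0..2*pi} \<theta> *
        e2ennreal ((Rplus u x \<theta>)\<^sup>2 - (Rminus u x \<theta>)\<^sup>2) / 2 \<partial>lborel)"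
    unfolding nn_integral_id_ereal_interval[OF Rplus_nonneg Rplus_less_infinity Rminus_nonneg]
    by (simp add: ennreal_times_divide)
  finally show ?thesis .
qed

end
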